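(* With $I_p$, $\mathcal S_p^{s,t}$ and $\mathcal U_p^{s,t}$ as defined in the context, $$\inf\Big\{I_p(f):\ f\in\bigcup_{t>0}\bigcap_{s>0}\mathcal S_p^{s,t}\Big\}\ \ge\ \inf_{t>0}\ \sup_{s>0}\ \inf_{f\in\mathcal U_p^{s,t}}I_p(f);$$ consequently the decay rate $J_p:=-\lim_{n\to\infty}\frac1n\log\mathbb P(Q_{\ell,n}>nb)$, which equals the left-hand side, satisfies $J_p\ge\inf_{t>0}\sup_{s>0}\inf_{f\in\mathcal U_p^{s,t}}I_p(f)$.
   Context: Priority queue: a link of rate $nc$ serves $n$ i.i.d. high-priority (hp) Gaussian sources and $n$ i.i.d. low-priority (lp) Gaussian sources, the classes independent. Each hp source is a Gaussian process $A_{h}$ on $\mathbb R$ with continuous paths, $A_h(0)=0$, stationary increments, $\mathbb E A_h(t)=\mu_ht$, $\mathrm{Var}(A_h(t)-A_h(s))=v_h(|t-s|)$; similarly lp sources with $\mu_\ell$, $v_\ell$; $\mu_h+\mu_\ell<c$; $v_h,v_\ell$ continuous, vanishing at 0, and $o(t^\alpha)$ for some $\alpha<2$. $A(s,t):=A(t)-A(s)$. $\Omega$: continuous $\omega:\mathbb R\to\mathbb R$ with $\omega(0)=0$, $\omega(t)/(1+|t|)\to0$ as $t\to\pm\infty$. $R_h,R_\ell$: reproducing kernel Hilbert spaces of the covariance functions $\Gamma_h(s,t)=\tfrac12(v_h(|s|)+v_h(|t|)-v_h(|t-s|))$ and $\Gamma_\ell$ (defined analogously). For $f=(f_h,f_\ell)\in\Omega\times\Omega$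 let $\bar f_h(t):=f_h(t)-\mu_ht$, $\bar f_\ell(t):=f_\ell(t)-\mu_\ell t$ and $I_p(f):=\frac12\|\bar f_h\|_{R_h}^2+\frac12\|\bar f_\ell\|_{R_\ell}^2$ (infinite unless $\bar f_h\in R_h$, $\bar f_\ell\in R_\ell$). Fix $b>0$. For $s,t>0$: $\mathcal S_p^{s,t}:=\{f\in\Omega\times\Omega: f_h(-s)-f_h(-t)-f_\ell(-t)>b+c(t-s)\}$, $\mathcal U_p^{s,t}:=\{f\in\Omega\times\Omega: -f_h(-t)-f_\ell(-t)\ge b+ct,\ f_h(-s)-f_h(-t)-f_\ell(-t)\ge b+c(t-s)\}$. $Q_{\ell,n}$ is the stationary low-priority queue content; $\mathbb P(Q_{\ell,n}>nb)$ equals the probability that the pair of empirical mean processes $(\frac1n\sum_{i=1}^nA_{h,i},\frac1n\sum_{i=1}^nA_{\ell,i})$ lies in $\bigcup_{t>0}\bigcap_{s>0}\mathcal S_p^{s,t}$. *)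

theory Defs
  imports "HOL-Analysis.Analysis"
begin

definition Omega :: "(real \<Rightarrow> real) set" where
  "Omega = {w. continuous_on UNIV w \<and> w 0 = 0 \<and>
                ((\<lambda>t. w t / (1 + \<bar>t\<bar>)) \<longlongrightarrow> 0) at_top \<and>
                ((\<lambda>t. w t / (1 + \<bar>t\<bar>)) \<longlongrightarrow> 0) at_bot}"

text \<open>Covariance function built from a variance function v.\<close>
definition Gam :: "(real \<Rightarrow> real) \<Rightarrow> real \<Rightarrow> real \<Rightarrow> real" where
  "Gam v s t = (v \<bar>s\<bar> + v \<bar>t\<bar> - v \<bar>t - s\<bar>) / 2"

text \<open>Reproducing kernel Hilbert space of a kernel K (Moore--Aronszajn construction).
  Finite kernel combinations are represented as lists of (point, coefficient).\<close>
definition kfun :: "(real \<Rightarrow> real \<Rightarrow> real) \<Rightarrow> (real \<times> real) list \<Rightarrow> real \<Rightarrow> real" where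
  "kfun K xs x = (\<Sum>(t,a)\<leftarrow>xs. a * K t x)"

definition knorm2 :: "(real \<Rightarrow> real \<Rightarrow> real) \<Rightarrow> (real \<times> real) list \<Rightarrow> real" where
  "knorm2 K xs = (\<Sum>(s,a)\<leftarrow>xs. \<Sum>(t,b)\<leftarrow>xs. a * b * K s t)"

definition kneg :: "(real \<times> real) list \<Rightarrow> (real \<times> real) list" where
  "kneg xs = map (\<lambda>(t,a). (t, - a)) xs"

definition rkhs_seq :: "(real \<Rightarrow> real \<Rightarrow> real) \<Rightarrow> (real \<Rightarrow> real) \<Rightarrow> (nat \<Rightarrow> (real \<times> real) list) \<Rightarrow> bool" where
  "rkhs_seq K f g \<longleftrightarrow>
     (\<forall>x. (\<lambda>n. kfun K (g n) x) \<longlonglongrightarrow> f x) \<and>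
     (\<forall>e>0. \<exists>N. \<forall>m\<ge>N. \<forall>n\<ge>N. knorm2 K (g m @ kneg (g n)) < e)"

definition in_rkhs :: "(real \<Rightarrow> real \<Rightarrow> real) \<Rightarrow> (real \<Rightarrow> real) \<Rightarrow> bool" where
  "in_rkhs K f \<longleftrightarrow> (\<exists>g. rkhs_seq K f g)"

definition rkhs_norm2 :: "(real \<Rightarrow> real \<Rightarrow> real) \<Rightarrow> (real \<Rightarrow> real) \<Rightarrow> ereal" where
  "rkhs_norm2 K f = (if in_rkhs K f
      then ereal (THE c. \<exists>g. rkhs_seq K f g \<and> (\<lambda>n. knorm2 K (g n)) \<longlonglongrightarrow> c)
      else \<infinity>)"

definition Ip :: "real \<Rightarrow> (real \<Rightarrow> real) \<Rightarrow> real \<Rightarrow> (real \<Rightarrow> real)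
                   \<Rightarrow> (real \<Rightarrow> real) \<times> (real \<Rightarrow> real) \<Rightarrow> ereal" where
  "Ip mu_h v_h mu_l v_l f =
     rkhs_norm2 (Gam v_h) (\<lambda>t. fst f t - mu_h * t) / 2
   + rkhs_norm2 (Gam v_l) (\<lambda>t. snd f t - mu_l * t) / 2"

definition Sp :: "real \<Rightarrow> real \<Rightarrow> real \<Rightarrow> real \<Rightarrow> ((real \<Rightarrow> real) \<times> (real \<Rightarrow> real)) set" where
  "Sp b c s t = {f. fst f \<in> Omega \<and> snd f \<in> Omega \<and>
      fst f (-s) - fst f (-t) - snd f (-t) > b + c * (t - s)}"

definition Up :: "real \<Rightarrow> real \<Rightarrow> real \<Rightarrow> real \<Rightarrow> ((real \<Rightarrow> real) \<times> (real \<Rightarrow> real)) set" where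
  "Up b c s t = {f. fst f \<in> Omega \<and> snd f \<in> Omega \<and>
      - fst f (-t) - snd f (-t) \<ge> b + c * t \<and>
      fst f (-s) - fst f (-t) - snd f (-t) \<ge> b + c * (t - s)}"

text \<open>Standing assumptions on a variance function: continuous, zero at 0,
  o(t^alpha) at infinity for some alpha < 2, and the induced Gam is a covariance
  (positive semidefinite) kernel, as it is the covariance of a Gaussian process.\<close>
definition admissible_var :: "(real \<Rightarrow> real) \<Rightarrow> bool" where
  "admissible_var v \<longleftrightarrow> continuous_on UNIV v \<and> v 0 = 0 \<and>
     (\<exists>\<alpha><2. ((\<lambda>t. v t / t powr \<alpha>) \<longlongrightarrow> 0) at_top) \<and>
     (\<forall>xs. knorm2 (Gam v) xs \<ge> 0)"

end

theory Submission
  imports Defs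
begin

(* A pair f lying in Sp b c s t for every s > 0 lies in every Up b c s t: the second constraint
   of Up is the non-strict form of the one of Sp, and letting s decrease to 0 in the strict
   inequality, by continuity of f_h and f_h(0) = 0, gives the first. The bound then follows
   because inf over (Union_t Inter_s U s t) dominates inf_t sup_s inf over U s t in any complete
   lattice. *)

lemma INF_UN_INT_ge_INF_SUP_INF:
  fixes I :: "'a \<Rightarrow> 'b::complete_lattice"
  shows "(INF t\<in>T. SUP s\<in>S. INF f\<in>U s t. I f) \<le> (INF f\<in>(\<Union>t\<in>T. \<Inter>s\<in>S. U s t). I f)"
proof (rule INF_greatest)
  fix f assume "f \<in> (\<Union>t\<in>T. \<Inter>s\<in>S. U s t)"
  then obtain t where t: "t \<in> T" and f: "\<And>s. s \<in> S \<Longrightarrow> f \<in> U s t" by blast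
  have "(SUP s\<in>S. INF f\<in>U s t. I f) \<le> I f"
    using f by (intro SUP_least INF_lower)
  then show "(INF t\<in>T. SUP s\<in>S. INF f\<in>U s t. I f) \<le> I f"
    by (rule INF_lower2[OF t])
qed

lemma le_if_less_at_right:
  fixes h :: "real \<Rightarrow> real"
  assumes "continuous (at_right x) h" and "\<And>s. s > x \<Longrightarrow> a < h s"
  shows "a \<le> h x"
proof (rule tendsto_lowerbound)
  show "(h \<longlongrightarrow> h x) (at_right x)"
    using assms(1) by (simp add: continuous_within)
  show "\<forall>\<^sub>F s in at_right x. a \<le> h s"
    using eventually_at_right_less[of x] by (rule eventually_mono) (simp add: assms(2) less_imp_le)
qed simp

lemma Sp_Inter_imp_Up:
  assumes Sp: "\<And>s'. s' > 0 \<Longrightarrow> f \<in> Sp b c s' t" and "s > 0"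
  shows "f \<in> Up b c s t"
proof -
  have fh: "fst f \<in> Omega" and "snd f \<in> Omega"
    and "fst f (-s) - fst f (-t) - snd f (-t) \<ge> b + c * (t - s)"
    using Sp[OF \<open>s > 0\<close>] by (auto simp: Sp_def)
  moreover have "b + c * t + fst f (-t) + snd f (-t) \<le> fst f (- 0) + c * 0"
  proof (rule le_if_less_at_right[where h = "\<lambda>s. fst f (-s) + c * s" and x = 0])
    have cont: "continuous_on UNIV (fst f)" using fh by (simp add: Omega_def)
    have "continuous_on UNIV (\<lambda>s. fst f (-s) + c * s)"
      by (intro continuous_on_add continuous_on_compose2[OF cont] continuous_intros) auto
    then show "continuous (at_right 0) (\<lambda>s. fst f (-s) + c * s)"
      by (auto simp: continuous_on_eq_continuous_at intro: continuous_at_imp_continuous_at_within)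
    show "b + c * t + fst f (-t) + snd f (-t) < fst f (-s') + c * s'" if "s' > 0" for s'
      using Sp[OF that] unfolding Sp_def by (simp add: algebra_simps)
  qed
  moreover have "fst f 0 = 0" using fh by (simp add: Omega_def)
  ultimately show ?thesis unfolding Up_def by simp
qed

theorem theorem5p2:
  fixes mu_h mu_l c b :: real and v_h v_l :: "real \<Rightarrow> real"
  assumes "admissible_var v_h" and "admissible_var v_l"
    and "mu_h + mu_l < c" and "b > 0"
  shows "(INF f\<in>{f. \<exists>t>0. \<forall>s>0. f \<in> Sp b c s t}. Ip mu_h v_h mu_l v_l f)
         \<ge> (INF t\<in>{0<..}. SUP s\<in>{0<..}. INF f\<in>Up b c s t. Ip mu_h v_h mu_l v_l f)"
proof -
  have "{f. \<exists>t>0. \<forall>s>0. f \<in> Sp b c s t} \<subseteq> (\<Union>t\<in>{0<..}. \<Inter>s\<in>{0<..}. Up b c s t)"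
    using Sp_Inter_imp_Up by blast
  then have "(INF f\<in>(\<Union>t\<in>{0<..}. \<Inter>s\<in>{0<..}. Up b c s t). Ip mu_h v_h mu_l v_l f)
      \<le> (INF f\<in>{f. \<exists>t>0. \<forall>s>0. f \<in> Sp b c s t}. Ip mu_h v_h mu_l v_l f)"
    by (rule INF_superset_mono) simp
  with INF_UN_INT_ge_INF_SUP_INF show ?thesis
    by (rule order_trans)
qed

end
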